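(* Let $n\ge3$ and $\alpha\in[0,1]$. Then \[ \rho(A_\alpha(P_n))\le\begin{cases}2\alpha+2(1-\alpha)\cos\left(\frac{\pi}{n+1}\right), & 0\le\alpha<1/2,\\[2pt] 2\alpha+2(1-\alpha)\cos\left(\frac{\pi}{n}\right), & 1/2\le\alpha\le1.\end{cases} \] Equality holds if and only if $\alpha\in\{0,1/2,1\}$.
   Context: $P_n$ is the path on $n$ vertices. For a graph $G$, $A(G)$ is the adjacency matrix, $D(G)$ the diagonal degree matrix, and $A_\alpha(G)=\alpha D(G)+(1-\alpha)A(G)$; $\rho(M)$ is the largest eigenvalue of a real symmetric matrix $M$. *)

theory Defs
  imports "Jordan_Normal_Form.Char_Poly"
begin

definition path_adj :: "nat \<Rightarrow> real mat" where
  "path_adj n = mat n n (\<lambda>(i, j). if i + 1 = j \<or> j + 1 = i then 1 else 0)"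

definition path_deg :: "nat \<Rightarrow> real mat" where
  "path_deg n = mat n n (\<lambda>(i, j). if i = j then (\<Sum>k<n. path_adj n $$ (i, k)) else 0)"

definition A_alpha :: "real \<Rightarrow> nat \<Rightarrow> real mat" where
  "A_alpha \<alpha> n = \<alpha> \<cdot>\<^sub>m path_deg n + (1 - \<alpha>) \<cdot>\<^sub>m path_adj n"

definition rho :: "real mat \<Rightarrow> real" where
  "rho M = Max {k. eigenvalue M k}"

end

theory Submission
  imports Defs "Jordan_Normal_Form.Spectral_Radius"
begin

text \<open>
  Write \<open>N\<close>, \<open>Df\<close> and \<open>Af\<close> for the quadratic forms \<open>\<Sum> f\<^sub>i\<^sup>2\<close>, \<open>f\<^sup>T D f\<close>, \<open>f\<^sup>T A f\<close> of the path,
  so that an eigenvector \<open>f\<close> of \<open>A\<^sub>\<alpha>\<close> with eigenvalue \<open>k\<close> satisfies \<open>k N = \<alpha> Df + (1 - \<alpha>) Af\<close>.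
  For every positive vector \<open>y\<close> one has \<open>Af \<le> \<Sum> (A y)\<^sub>i / y\<^sub>i f\<^sub>i\<^sup>2\<close>, with equality only if
  \<open>f\<close> is proportional to \<open>y\<close>. Taking for \<open>y\<close> the Perron vectors of \<open>A(P\<^sub>n)\<close> and of the signless
  Laplacian \<open>D + A\<close> gives \<open>Af \<le> 2 cos(\<pi>/(n+1)) N\<close> and \<open>Df + Af \<le> (2 + 2 cos(\<pi>/n)) N\<close>;
  together with \<open>Df \<le> 2 N\<close> these bound \<open>k\<close> by writing \<open>\<alpha> Df + (1 - \<alpha>) Af\<close> as
  \<open>\<alpha> (Df + Af) + (1 - 2\<alpha>) Af\<close> for \<open>\<alpha> < 1/2\<close> and as \<open>(2\<alpha> - 1) Df + (1 - \<alpha>) (Df + Af)\<close>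
  for \<open>\<alpha> \<ge> 1/2\<close>. The equality analysis of these estimates leaves only \<open>\<alpha> \<in> {0, 1/2, 1}\<close>,
  where the bound is attained by explicit eigenvectors.
\<close>

subsection \<open>Real symmetric matrices have real eigenvalues\<close>

lemma symmetric_bilinear_swap:
  fixes M :: "real mat"
  assumes "\<And>i j. i < n \<Longrightarrow> j < n \<Longrightarrow> M $$ (i, j) = M $$ (j, i)"
  shows "(\<Sum>i<n. y i * (\<Sum>j<n. M $$ (i, j) * x j)) = (\<Sum>i<n. x i * (\<Sum>j<n. M $$ (i, j) * y j))"
proof -
  have "(\<Sum>i<n. y i * (\<Sum>j<n. M $$ (i, j) * x j)) = (\<Sum>i<n. \<Sum>j<n. y i * M $$ (i, j) * x j)"
    by (simp add: sum_distrib_left algebra_simps)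
  also have "\<dots> = (\<Sum>j<n. \<Sum>i<n. y i * M $$ (i, j) * x j)" by (rule sum.swap)
  also have "\<dots> = (\<Sum>j<n. x j * (\<Sum>i<n. M $$ (j, i) * y i))"
    by (simp add: sum_distrib_left algebra_simps assms)
  finally show ?thesis .
qed

text \<open>A complex eigenpair \<open>M w = z w\<close> splits into \<open>M x = p x - q y\<close>, \<open>M y = p y + q x\<close>;
  symmetry of \<open>M\<close> then forces \<open>q (|x|\<^sup>2 + |y|\<^sup>2) = 0\<close>, i.e. \<open>z = p\<close> is real.\<close>

lemma symmetric_real_eigenvalue_exists:
  fixes M :: "real mat"
  assumes M: "M \<in> carrier_mat n n" and n: "0 < n"
    and sym: "\<And>i j. i < n \<Longrightarrow> j < n \<Longrightarrow> M $$ (i, j) = M $$ (j, i)"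
  shows "\<exists>r. eigenvalue M r"
proof -
  define Mc where "Mc = map_mat complex_of_real M"
  have Mc: "Mc \<in> carrier_mat n n" using M unfolding Mc_def by simp
  obtain z where "eigenvalue Mc z"
    using spectrum_non_empty[OF Mc n] unfolding spectrum_def by auto
  then obtain w where wc: "w \<in> carrier_vec n" and wnz: "w \<noteq> 0\<^sub>v n" and wev: "Mc *\<^sub>v w = z \<cdot>\<^sub>v w"
    unfolding eigenvalue_def eigenvector_def using Mc by auto
  define x where "x j = Re (w $ j)" for j
  define y where "y j = Im (w $ j)" for j
  define p where "p = Re z"
  define q where "q = Im z"
  have row: "(\<Sum>j<n. complex_of_real (M $$ (i, j)) * w $ j) = z * w $ i" if "i < n" for i
  proof -
    have "(Mc *\<^sub>v w) $ i = (\<Sum>j<n. complex_of_real (M $$ (i, j)) * w $ j)"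
      using Mc wc that M unfolding Mc_def by (auto simp: scalar_prod_def lessThan_atLeast0 intro!: sum.cong)
    then show ?thesis using wev wc that by simp
  qed
  have Mx: "(\<Sum>j<n. M $$ (i, j) * x j) = p * x i - q * y i" if "i < n" for i
    using arg_cong[OF row[OF that], of Re] unfolding x_def y_def p_def q_def by (simp add: Re_sum)
  have My: "(\<Sum>j<n. M $$ (i, j) * y j) = p * y i + q * x i" if "i < n" for i
    using arg_cong[OF row[OF that], of Im] unfolding x_def y_def p_def q_def by (simp add: Im_sum algebra_simps)
  have "(\<Sum>i<n. y i * (p * x i - q * y i)) = (\<Sum>i<n. x i * (p * y i + q * x i))"
    using symmetric_bilinear_swap[of n M y x, OF sym] by (simp add: Mx My)
  then have "q * (\<Sum>i<n. x i ^ 2 + y i ^ 2) = 0"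
    by (simp add: sum_distrib_left sum_subtractf sum.distrib algebra_simps power2_eq_square)
  moreover obtain i where i: "i < n" "w $ i \<noteq> 0"
    using wnz wc by (metis eq_vecI carrier_vecD index_zero_vec(1,2))
  then have "0 < (\<Sum>i<n. x i ^ 2 + y i ^ 2)"
    unfolding x_def y_def
    by (intro order.strict_trans2[OF _ member_le_sum[of i]]) (auto simp: complex_neq_0)
  ultimately have "z = complex_of_real p"
    unfolding p_def q_def by (simp add: complex_eq_iff)
  moreover have "poly (char_poly Mc) z = 0"
    using \<open>eigenvalue Mc z\<close> eigenvalue_root_char_poly[OF Mc] by simp
  moreover have "char_poly Mc = map_poly of_real (char_poly M)"
    unfolding Mc_def by (rule of_real_hom.char_poly_hom[OF M])
  ultimately have "complex_of_real (poly (char_poly M) p) = 0" by simp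
  then show ?thesis using eigenvalue_root_char_poly[OF M] by auto
qed

subsection \<open>The matrix \<open>A\<^sub>\<alpha>(P\<^sub>n)\<close>\<close>

definition path_nbr_sum :: "nat \<Rightarrow> (nat \<Rightarrow> real) \<Rightarrow> nat \<Rightarrow> real" where
  "path_nbr_sum n g i = (if 0 < i then g (i - 1) else 0) + (if Suc i < n then g (Suc i) else 0)"

definition path_degree :: "nat \<Rightarrow> nat \<Rightarrow> real" where
  "path_degree n i = path_nbr_sum n (\<lambda>_. 1) i"

lemma path_degree_eq:
  assumes "i < n" "2 \<le> n"
  shows "path_degree n i = (if i = 0 \<or> Suc i = n then 1 else 2)"
  using assms unfolding path_degree_def path_nbr_sum_def by auto

lemma sum_path_adj_row:
  assumes "i < n"
  shows "(\<Sum>j<n. (if i + 1 = j \<or> j + 1 = i then 1 else 0) * g j) = path_nbr_sum n g i"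
proof -
  have "(\<Sum>j<n. (if i + 1 = j \<or> j + 1 = i then 1 else 0) * g j)
     = (\<Sum>j<n. if j = Suc i then g j else 0) + (\<Sum>j<n. if j = i - 1 \<and> 0 < i then g j else 0)"
    by (subst sum.distrib[symmetric], rule sum.cong) auto
  also have "\<dots> = path_nbr_sum n g i"
    unfolding path_nbr_sum_def using assms by (auto simp: sum.delta' sum.If_cases)
  finally show ?thesis .
qed

lemma sum_path_nbr_sum_mult:
  "(\<Sum>i<n. path_nbr_sum n g i * h i) = (\<Sum>i<n-1. g i * h (Suc i) + g (Suc i) * h i)"
proof (cases n)
  case (Suc m)
  have "(\<Sum>i<n. path_nbr_sum n g i * h i)
      = (\<Sum>i<Suc m. if 0 < i then g (i - 1) * h i else 0)
      + (\<Sum>i<Suc m. if Suc i < Suc m then g (Suc i) * h i else 0)"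
    unfolding path_nbr_sum_def Suc sum.distrib[symmetric] by (rule sum.cong) (auto simp: algebra_simps)
  also have "(\<Sum>i<Suc m. if 0 < i then g (i - 1) * h i else 0) = (\<Sum>i<m. g i * h (Suc i))"
    by (subst sum.lessThan_Suc_shift) simp
  also have "(\<Sum>i<Suc m. if Suc i < Suc m then g (Suc i) * h i else 0) = (\<Sum>i<m. g (Suc i) * h i)"
    by (simp add: sum.lessThan_Suc)
  finally show ?thesis using Suc by (simp add: sum.distrib)
qed simp

lemma A_alpha_carrier: "A_alpha \<alpha> n \<in> carrier_mat n n"
  unfolding A_alpha_def path_deg_def path_adj_def by auto

lemma A_alpha_index:
  assumes "i < n" "j < n"
  shows "A_alpha \<alpha> n $$ (i, j) =
    (if i = j then \<alpha> * path_degree n i else 0) + (1 - \<alpha>) * (if i + 1 = j \<or> j + 1 = i then 1 else 0)"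
proof -
  have "(\<Sum>k<n. path_adj n $$ (i, k)) = (\<Sum>k<n. (if i + 1 = k \<or> k + 1 = i then 1 else 0) * 1)"
    by (rule sum.cong) (auto simp: path_adj_def assms)
  also have "\<dots> = path_degree n i"
    using sum_path_adj_row[OF assms(1), of "\<lambda>_. 1"] unfolding path_degree_def by simp
  finally show ?thesis
    using assms unfolding A_alpha_def path_deg_def path_adj_def by (auto simp: lessThan_atLeast0)
qed

lemma A_alpha_symmetric: "i < n \<Longrightarrow> j < n \<Longrightarrow> A_alpha \<alpha> n $$ (i, j) = A_alpha \<alpha> n $$ (j, i)"
  by (auto simp: A_alpha_index)

lemma A_alpha_mult_vec_index:
  assumes "i < n" "v \<in> carrier_vec n"
  shows "(A_alpha \<alpha> n *\<^sub>v v) $ i = \<alpha> * path_degree n i * v $ i + (1 - \<alpha>) * path_nbr_sum n (($) v) i"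
proof -
  have "(A_alpha \<alpha> n *\<^sub>v v) $ i = (\<Sum>j<n. A_alpha \<alpha> n $$ (i, j) * v $ j)"
    using assms A_alpha_carrier[of \<alpha> n] by (auto simp: scalar_prod_def lessThan_atLeast0)
  also have "\<dots> = (\<Sum>j<n. (if j = i then \<alpha> * path_degree n i * v $ j else 0)
      + (1 - \<alpha>) * ((if i + 1 = j \<or> j + 1 = i then 1 else 0) * v $ j))"
    by (rule sum.cong) (auto simp: A_alpha_index assms algebra_simps)
  also have "\<dots> = \<alpha> * path_degree n i * v $ i + (1 - \<alpha>) * path_nbr_sum n (($) v) i"
    using assms sum_path_adj_row[OF assms(1), of "($) v"]
    by (simp add: sum.distrib sum_distrib_left[symmetric])
  finally show ?thesis .
qed

definition A_alpha_eigenfun :: "real \<Rightarrow> nat \<Rightarrow> real \<Rightarrow> (nat \<Rightarrow> real) \<Rightarrow> bool" where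
  "A_alpha_eigenfun \<alpha> n k f \<longleftrightarrow> (\<exists>i<n. f i \<noteq> 0) \<and>
     (\<forall>i<n. \<alpha> * path_degree n i * f i + (1 - \<alpha>) * path_nbr_sum n f i = k * f i)"

lemma eigenvalue_A_alpha_iff: "eigenvalue (A_alpha \<alpha> n) k \<longleftrightarrow> (\<exists>f. A_alpha_eigenfun \<alpha> n k f)"
proof
  assume "eigenvalue (A_alpha \<alpha> n) k"
  then obtain v where v: "v \<in> carrier_vec n" "v \<noteq> 0\<^sub>v n" "A_alpha \<alpha> n *\<^sub>v v = k \<cdot>\<^sub>v v"
    unfolding eigenvalue_def eigenvector_def using A_alpha_carrier[of \<alpha> n] by auto
  have "\<exists>i<n. v $ i \<noteq> 0"
    using v(1,2) by (metis eq_vecI carrier_vecD index_zero_vec(1,2))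
  moreover have "\<alpha> * path_degree n i * v $ i + (1 - \<alpha>) * path_nbr_sum n (($) v) i = k * v $ i"
    if "i < n" for i
    using A_alpha_mult_vec_index[OF that v(1)] arg_cong[OF v(3), of "\<lambda>w. w $ i"] v(1) that by simp
  ultimately show "\<exists>f. A_alpha_eigenfun \<alpha> n k f" unfolding A_alpha_eigenfun_def by blast
next
  assume "\<exists>f. A_alpha_eigenfun \<alpha> n k f"
  then obtain f i0 where i0: "i0 < n" "f i0 \<noteq> 0"
    and f: "\<And>i. i < n \<Longrightarrow> \<alpha> * path_degree n i * f i + (1 - \<alpha>) * path_nbr_sum n f i = k * f i"
    unfolding A_alpha_eigenfun_def by blast
  have nbr: "path_nbr_sum n (($) (vec n f)) i = path_nbr_sum n f i" if "i < n" for i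
    using that unfolding path_nbr_sum_def by auto
  have "vec n f \<noteq> 0\<^sub>v n"
    using i0 by (metis index_vec index_zero_vec(1))
  moreover have "A_alpha \<alpha> n *\<^sub>v vec n f = k \<cdot>\<^sub>v vec n f"
  proof (rule eq_vecI)
    fix i assume "i < dim_vec (k \<cdot>\<^sub>v vec n f)"
    then have i: "i < n" by simp
    show "(A_alpha \<alpha> n *\<^sub>v vec n f) $ i = (k \<cdot>\<^sub>v vec n f) $ i"
      using A_alpha_mult_vec_index[OF i, of "vec n f" \<alpha>] f[OF i] nbr[OF i] i by simp
  qed (use A_alpha_carrier[of \<alpha> n] in simp)
  ultimately show "eigenvalue (A_alpha \<alpha> n) k"
    unfolding eigenvalue_def eigenvector_def using A_alpha_carrier[of \<alpha> n] by (auto intro!: exI[of _ "vec n f"])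
qed

subsection \<open>Quadratic forms and positive test vectors\<close>

definition sq_sum :: "nat \<Rightarrow> (nat \<Rightarrow> real) \<Rightarrow> real" where
  "sq_sum n f = (\<Sum>i<n. f i ^ 2)"

definition path_deg_form :: "nat \<Rightarrow> (nat \<Rightarrow> real) \<Rightarrow> real" where
  "path_deg_form n f = (\<Sum>i<n. path_degree n i * f i ^ 2)"

definition path_adj_form :: "nat \<Rightarrow> (nat \<Rightarrow> real) \<Rightarrow> real" where
  "path_adj_form n f = (\<Sum>i<n. f i * path_nbr_sum n f i)"

lemma sq_sum_pos: "i < n \<Longrightarrow> f i \<noteq> 0 \<Longrightarrow> 0 < sq_sum n f"
  unfolding sq_sum_def
  by (rule order.strict_trans2[OF _ member_le_sum[of i]]) auto

lemma A_alpha_eigenfun_rayleigh: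
  assumes "A_alpha_eigenfun \<alpha> n k f"
  shows "k * sq_sum n f = \<alpha> * path_deg_form n f + (1 - \<alpha>) * path_adj_form n f"
proof -
  have eig: "k * f i = \<alpha> * path_degree n i * f i + (1 - \<alpha>) * path_nbr_sum n f i" if "i < n" for i
    using assms that unfolding A_alpha_eigenfun_def by simp
  have "k * sq_sum n f = (\<Sum>i<n. f i * (k * f i))"
    unfolding sq_sum_def by (simp add: sum_distrib_left power2_eq_square algebra_simps)
  also have "\<dots> = (\<Sum>i<n. \<alpha> * (path_degree n i * f i ^ 2) + (1 - \<alpha>) * (f i * path_nbr_sum n f i))"
    by (rule sum.cong) (simp_all add: eig power2_eq_square distrib_left)
  finally show ?thesis
    unfolding path_deg_form_def path_adj_form_def by (simp add: sum.distrib sum_distrib_left)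
qed

lemma path_deg_form_le:
  assumes "2 \<le> n"
  shows "path_deg_form n f \<le> 2 * sq_sum n f"
  unfolding path_deg_form_def sq_sum_def sum_distrib_left
  by (rule sum_mono) (use assms in \<open>auto simp: path_degree_eq intro!: mult_right_mono\<close>)

lemma path_deg_form_eq_imp_first_zero:
  assumes "2 \<le> n" and eq: "path_deg_form n f = 2 * sq_sum n f"
  shows "f 0 = 0"
proof -
  have "2 * sq_sum n f - path_deg_form n f = (\<Sum>i<n. (2 - path_degree n i) * f i ^ 2)"
    unfolding sq_sum_def path_deg_form_def by (simp add: sum_subtractf sum_distrib_left algebra_simps)
  also have "\<dots> = f 0 ^ 2 + (\<Sum>i\<in>{..<n} - {0}. (2 - path_degree n i) * f i ^ 2)"
    by (subst sum.remove[of _ 0]) (use assms in \<open>auto simp: path_degree_eq\<close>)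
  finally have "f 0 ^ 2 + (\<Sum>i\<in>{..<n} - {0}. (2 - path_degree n i) * f i ^ 2) = 0"
    using eq by simp
  moreover have "0 \<le> (\<Sum>i\<in>{..<n} - {0}. (2 - path_degree n i) * f i ^ 2)"
    by (rule sum_nonneg) (use assms in \<open>auto simp: path_degree_eq\<close>)
  ultimately show ?thesis
    by (smt (verit) zero_le_power2 power_eq_0_iff)
qed

lemma weighted_sq_sum_minus_path_adj_form:
  assumes pos: "\<And>i. i < n \<Longrightarrow> 0 < y i"
  shows "(\<Sum>i<n. path_nbr_sum n y i / y i * f i ^ 2) - path_adj_form n f
     = (\<Sum>i<n-1. (y (Suc i) * f i - y i * f (Suc i))^2 / (y i * y (Suc i)))"
proof -
  have weighted: "(\<Sum>i<n. path_nbr_sum n y i / y i * f i ^ 2)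
      = (\<Sum>i<n-1. y i * (f (Suc i) ^ 2 / y (Suc i)) + y (Suc i) * (f i ^ 2 / y i))"
    using sum_path_nbr_sum_mult[of n y "\<lambda>i. f i ^ 2 / y i"] by simp
  have adj: "path_adj_form n f = (\<Sum>i<n-1. 2 * (f i * f (Suc i)))"
    unfolding path_adj_form_def using sum_path_nbr_sum_mult[of n f f]
    by (simp add: mult.commute)
  have summand: "(y (Suc i) * f i - y i * f (Suc i))^2 / (y i * y (Suc i)) =
      y i * (f (Suc i) ^ 2 / y (Suc i)) + y (Suc i) * (f i ^ 2 / y i) - 2 * (f i * f (Suc i))"
    if "i < n - 1" for i
  proof -
    have "0 < y i" "0 < y (Suc i)" using pos that by auto
    then show ?thesis by (simp add: field_simps power2_eq_square)
  qed
  show ?thesis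
    unfolding weighted adj by (simp add: summand sum_subtractf)
qed

lemma path_adj_form_le_weighted_sq_sum:
  assumes "\<And>i. i < n \<Longrightarrow> 0 < y i"
  shows "path_adj_form n f \<le> (\<Sum>i<n. path_nbr_sum n y i / y i * f i ^ 2)"
proof -
  have "0 \<le> (\<Sum>i<n-1. (y (Suc i) * f i - y i * f (Suc i))^2 / (y i * y (Suc i)))"
    by (rule sum_nonneg) (use assms in \<open>auto intro!: divide_nonneg_pos\<close>)
  then show ?thesis
    using weighted_sq_sum_minus_path_adj_form[of n y f, OF assms] by linarith
qed

lemma path_adj_form_eq_weighted_sq_sum_imp_proportional:
  assumes pos: "\<And>i. i < n \<Longrightarrow> 0 < y i"
    and eq: "path_adj_form n f = (\<Sum>i<n. path_nbr_sum n y i / y i * f i ^ 2)"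
    and i: "i < n - 1"
  shows "y (Suc i) * f i = y i * f (Suc i)"
proof -
  have "(\<Sum>i<n-1. (y (Suc i) * f i - y i * f (Suc i))^2 / (y i * y (Suc i))) = 0"
    using weighted_sq_sum_minus_path_adj_form[of n y f, OF pos] eq by linarith
  then have "(y (Suc i) * f i - y i * f (Suc i))^2 / (y i * y (Suc i)) = 0"
    using i by (subst (asm) sum_nonneg_eq_0_iff) (use pos in \<open>auto intro!: divide_nonneg_pos\<close>)
  moreover have "0 < y i" "0 < y (Suc i)" using pos i by auto
  ultimately show ?thesis by simp
qed

subsection \<open>Perron vectors of \<open>A(P\<^sub>n)\<close> and of \<open>D(P\<^sub>n) + A(P\<^sub>n)\<close>\<close>

definition path_adj_perron :: "nat \<Rightarrow> nat \<Rightarrow> real" where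
  "path_adj_perron n i = sin (real (Suc i) * (pi / real (Suc n)))"

definition path_signless_perron :: "nat \<Rightarrow> nat \<Rightarrow> real" where
  "path_signless_perron n i = sin (real (2 * i + 1) * (pi / real (2 * n)))"

lemma sin_mult_pi_div_pos:
  assumes "0 < a" "a < b"
  shows "0 < sin (a * (pi / b))"
proof (rule sin_gt_zero)
  show "0 < a * (pi / b)" using assms by simp
  have "a * (pi / b) = pi * (a / b)" by simp
  also have "\<dots> < pi * 1" using assms by (intro mult_strict_left_mono) auto
  finally show "a * (pi / b) < pi" by simp
qed

lemma path_adj_perron_pos: "i < n \<Longrightarrow> 0 < path_adj_perron n i"
  unfolding path_adj_perron_def by (rule sin_mult_pi_div_pos) auto

lemma path_signless_perron_pos: "i < n \<Longrightarrow> 0 < path_signless_perron n i"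
  unfolding path_signless_perron_def by (rule sin_mult_pi_div_pos) auto

lemma sin_diff_plus_sin_add: "sin (x - t) + sin (x + t) = 2 * cos t * sin (x :: real)"
  by (simp add: sin_add sin_diff)

lemma path_nbr_sum_adj_perron:
  assumes "i < n"
  shows "path_nbr_sum n (path_adj_perron n) i = 2 * cos (pi / real (Suc n)) * path_adj_perron n i"
proof -
  let ?t = "pi / real (Suc n)" and ?x = "real (Suc i) * (pi / real (Suc n))"
  have shift_left: "real (Suc (i - 1)) * t = real (Suc i) * t - t" if "0 < i" for t :: real
    using that by (simp add: of_nat_diff algebra_simps)
  have shift_right: "real (Suc (Suc i)) * t = real (Suc i) * t + t" for t :: real
    by (simp add: algebra_simps)
  have left: "(if 0 < i then path_adj_perron n (i - 1) else 0) = sin (?x - ?t)"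
  proof (cases "i = 0")
    case False
    then show ?thesis unfolding path_adj_perron_def by (subst shift_left) auto
  qed simp
  have right: "(if Suc i < n then path_adj_perron n (Suc i) else 0) = sin (?x + ?t)"
  proof (cases "Suc i < n")
    case True
    then show ?thesis unfolding path_adj_perron_def by (subst shift_right) auto
  next
    case False
    then have last: "n = Suc i" using assms by simp
    have "?x + ?t = real (Suc (Suc i)) * ?t" using shift_right[of ?t] by simp
    also have "\<dots> = pi" using last by simp
    finally show ?thesis using False by simp
  qed
  have "sin (?x - ?t) + sin (?x + ?t) = 2 * cos ?t * path_adj_perron n i"
    unfolding path_adj_perron_def by (rule sin_diff_plus_sin_add)
  then show ?thesis unfolding path_nbr_sum_def left right .
qed

text \<open>At the two ends the reflections \<open>sin(-t) = -sin t\<close> and \<open>sin(\<pi> + t) = -sin(\<pi> - t)\<close>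
  of the missing neighbours are exactly compensated by the degree drop.\<close>

lemma path_nbr_sum_signless_perron:
  assumes "i < n" "2 \<le> n"
  shows "path_nbr_sum n (path_signless_perron n) i
    = (2 + 2 * cos (pi / real n) - path_degree n i) * path_signless_perron n i"
proof -
  let ?t = "pi / real (2 * n)" and ?x = "real (2 * i + 1) * (pi / real (2 * n))"
  have t2: "2 * ?t = pi / real n" by simp
  have shift_left: "real (2 * (i - 1) + 1) * t = real (2 * i + 1) * t - 2 * t" if "0 < i" for t :: real
    using that by (simp add: of_nat_diff algebra_simps)
  have shift_right: "real (2 * Suc i + 1) * t = real (2 * i + 1) * t + 2 * t" for t :: real
    by (simp add: algebra_simps)
  have left: "(if 0 < i then path_signless_perron n (i - 1) else 0)
      = sin (?x - 2 * ?t) + (if i = 0 then path_signless_perron n i else 0)"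
  proof (cases "i = 0")
    case True
    then show ?thesis unfolding path_signless_perron_def by (simp add: sin_diff)
  next
    case False
    then show ?thesis unfolding path_signless_perron_def by (subst shift_left) auto
  qed
  have right: "(if Suc i < n then path_signless_perron n (Suc i) else 0)
      = sin (?x + 2 * ?t) + (if Suc i = n then path_signless_perron n i else 0)"
  proof (cases "Suc i < n")
    case True
    then show ?thesis unfolding path_signless_perron_def by (subst shift_right) auto
  next
    case False
    then have last: "n = Suc i" using assms by simp
    have "real (2 * i + 1) = real (2 * n) - 1" using last by simp
    then have "?x = real (2 * n) * ?t - ?t" by (simp only: left_diff_distrib mult_1)
    also have "real (2 * n) * ?t = pi" using assms by simp
    finally have "?x = pi - ?t" .
    then show ?thesis
      using last unfolding path_signless_perron_def by (simp add: sin_add sin_diff)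
  qed
  have "path_nbr_sum n (path_signless_perron n) i = 2 * cos (pi / real n) * path_signless_perron n i
      + (if i = 0 then path_signless_perron n i else 0) + (if Suc i = n then path_signless_perron n i else 0)"
    unfolding path_nbr_sum_def left right
    using sin_diff_plus_sin_add[of ?x "2 * ?t"] unfolding t2 path_signless_perron_def by simp
  also have "\<dots> = (2 + 2 * cos (pi / real n) - path_degree n i) * path_signless_perron n i"
    using assms by (auto simp: path_degree_eq algebra_simps)
  finally show ?thesis .
qed

lemma path_adj_form_le: "path_adj_form n f \<le> 2 * cos (pi / real (Suc n)) * sq_sum n f"
proof -
  have "path_adj_form n f \<le> (\<Sum>i<n. path_nbr_sum n (path_adj_perron n) i / path_adj_perron n i * f i ^ 2)"
    by (rule path_adj_form_le_weighted_sq_sum) (rule path_adj_perron_pos)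
  also have "\<dots> = (\<Sum>i<n. 2 * cos (pi / real (Suc n)) * f i ^ 2)"
    by (rule sum.cong) (auto simp: path_nbr_sum_adj_perron dest: path_adj_perron_pos[of _ n])
  finally show ?thesis unfolding sq_sum_def by (simp add: sum_distrib_left)
qed

lemma weighted_sq_sum_signless_perron:
  assumes "2 \<le> n"
  shows "(\<Sum>i<n. path_nbr_sum n (path_signless_perron n) i / path_signless_perron n i * f i ^ 2)
    = (2 + 2 * cos (pi / real n)) * sq_sum n f - path_deg_form n f"
proof -
  have "path_nbr_sum n (path_signless_perron n) i / path_signless_perron n i
      = 2 + 2 * cos (pi / real n) - path_degree n i" if "i < n" for i
    using path_nbr_sum_signless_perron[OF that assms] path_signless_perron_pos[OF that] by simp
  then have "(\<Sum>i<n. path_nbr_sum n (path_signless_perron n) i / path_signless_perron n i * f i ^ 2)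
      = (\<Sum>i<n. (2 + 2 * cos (pi / real n)) * f i ^ 2 - path_degree n i * f i ^ 2)"
    by (intro sum.cong) (simp_all add: left_diff_distrib)
  then show ?thesis
    unfolding sq_sum_def path_deg_form_def by (simp add: sum_subtractf sum_distrib_left)
qed

lemma path_signless_form_le:
  assumes "2 \<le> n"
  shows "path_deg_form n f + path_adj_form n f \<le> (2 + 2 * cos (pi / real n)) * sq_sum n f"
  using path_adj_form_le_weighted_sq_sum[of n "path_signless_perron n" f] path_signless_perron_pos
    weighted_sq_sum_signless_perron[OF assms] by fastforce

lemma path_signless_form_eq_imp_zero:
  assumes n: "2 \<le> n" and eq: "path_deg_form n f + path_adj_form n f = (2 + 2 * cos (pi / real n)) * sq_sum n f"
    and f0: "f 0 = 0"
  shows "i < n \<Longrightarrow> f i = 0"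
proof (induction i)
  case (Suc i)
  have "path_signless_perron n (Suc i) * f i = path_signless_perron n i * f (Suc i)"
    by (rule path_adj_form_eq_weighted_sq_sum_imp_proportional[where n = n and y = "path_signless_perron n"])
      (use Suc eq path_signless_perron_pos weighted_sq_sum_signless_perron[OF n] in auto)
  then show ?case
    using Suc path_signless_perron_pos[of i n] by simp
qed (rule f0)

definition A_alpha_path_bound :: "real \<Rightarrow> nat \<Rightarrow> real" where
  "A_alpha_path_bound \<alpha> n = (if \<alpha> < 1/2 then 2*\<alpha> + 2*(1-\<alpha>)*cos (pi / real (n+1))
                                 else 2*\<alpha> + 2*(1-\<alpha>)*cos (pi / real n))"

lemma cos_pi_div_less: "2 \<le> n \<Longrightarrow> cos (pi / real n) < cos (pi / real (Suc n))"
  by (rule cos_monotone_0_pi) (auto simp: field_simps)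

lemma A_alpha_eigenfun_le_below_half:
  assumes n: "2 \<le> n" and \<alpha>: "0 \<le> \<alpha>" "\<alpha> < 1/2" and f: "A_alpha_eigenfun \<alpha> n k f"
  shows "k \<le> A_alpha_path_bound \<alpha> n" "\<alpha> \<noteq> 0 \<Longrightarrow> k < A_alpha_path_bound \<alpha> n"
proof -
  define cA where "cA = cos (pi / real (Suc n))"
  define cB where "cB = cos (pi / real n)"
  let ?N = "sq_sum n f" and ?D = "path_deg_form n f" and ?A = "path_adj_form n f"
  have N: "0 < ?N" using f sq_sum_pos unfolding A_alpha_eigenfun_def by blast
  have "k * ?N = \<alpha> * (?D + ?A) + (1 - 2 * \<alpha>) * ?A"
    using A_alpha_eigenfun_rayleigh[OF f] by (simp add: algebra_simps)
  also have "\<dots> \<le> \<alpha> * ((2 + 2 * cB) * ?N) + (1 - 2 * \<alpha>) * (2 * cA * ?N)"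
    using path_signless_form_le[OF n, of f] path_adj_form_le[of n f] \<alpha> unfolding cA_def cB_def
    by (intro add_mono mult_left_mono) auto
  also have "\<dots> = A_alpha_path_bound \<alpha> n * ?N - 2 * \<alpha> * (cA - cB) * ?N"
    using \<alpha> unfolding A_alpha_path_bound_def cA_def cB_def by (simp add: algebra_simps)
  finally have k: "k * ?N \<le> A_alpha_path_bound \<alpha> n * ?N - 2 * \<alpha> * (cA - cB) * ?N" .
  have gap: "0 \<le> 2 * \<alpha> * (cA - cB) * ?N" "\<alpha> \<noteq> 0 \<Longrightarrow> 0 < 2 * \<alpha> * (cA - cB) * ?N"
    using \<alpha> N cos_pi_div_less[OF n] unfolding cA_def cB_def by (auto intro!: mult_nonneg_nonneg mult_pos_pos)
  show "k \<le> A_alpha_path_bound \<alpha> n"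
    using k gap(1) N by (intro mult_right_le_imp_le[of k ?N]) linarith+
  show "k < A_alpha_path_bound \<alpha> n" if "\<alpha> \<noteq> 0"
    using k gap(2)[OF that] N by (intro mult_right_less_imp_less[of k ?N]) linarith+
qed

lemma A_alpha_eigenfun_le_above_half:
  assumes n: "2 \<le> n" and \<alpha>: "1/2 \<le> \<alpha>" "\<alpha> \<le> 1" and f: "A_alpha_eigenfun \<alpha> n k f"
  shows "k \<le> A_alpha_path_bound \<alpha> n" "\<alpha> \<noteq> 1/2 \<Longrightarrow> \<alpha> \<noteq> 1 \<Longrightarrow> k < A_alpha_path_bound \<alpha> n"
proof -
  define cB where "cB = cos (pi / real n)"
  let ?N = "sq_sum n f" and ?D = "path_deg_form n f" and ?A = "path_adj_form n f"
  have N: "0 < ?N" using f sq_sum_pos unfolding A_alpha_eigenfun_def by blast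
  have k: "k * ?N = (2 * \<alpha> - 1) * ?D + (1 - \<alpha>) * (?D + ?A)"
    using A_alpha_eigenfun_rayleigh[OF f] by (simp add: algebra_simps)
  have bound: "A_alpha_path_bound \<alpha> n * ?N = (2 * \<alpha> - 1) * (2 * ?N) + (1 - \<alpha>) * ((2 + 2 * cB) * ?N)"
    using \<alpha> unfolding A_alpha_path_bound_def cB_def by (simp add: algebra_simps)
  have D: "(2 * \<alpha> - 1) * ?D \<le> (2 * \<alpha> - 1) * (2 * ?N)"
    using path_deg_form_le[OF n] \<alpha> by (intro mult_left_mono) auto
  have DA: "(1 - \<alpha>) * (?D + ?A) \<le> (1 - \<alpha>) * ((2 + 2 * cB) * ?N)"
    using path_signless_form_le[OF n] \<alpha> unfolding cB_def by (intro mult_left_mono) auto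
  show le: "k \<le> A_alpha_path_bound \<alpha> n"
    using D DA N k bound by (intro mult_right_le_imp_le[of k ?N]) linarith+
  show "k < A_alpha_path_bound \<alpha> n" if "\<alpha> \<noteq> 1/2" "\<alpha> \<noteq> 1"
  proof (rule ccontr)
    assume "\<not> ?thesis"
    then have "k * ?N = A_alpha_path_bound \<alpha> n * ?N" using le by simp
    then have "(2 * \<alpha> - 1) * ?D = (2 * \<alpha> - 1) * (2 * ?N)"
      and "(1 - \<alpha>) * (?D + ?A) = (1 - \<alpha>) * ((2 + 2 * cB) * ?N)"
      using D DA k bound by linarith+
    then have "?D = 2 * ?N" and "?D + ?A = (2 + 2 * cB) * ?N"
      using \<alpha> that by auto
    then have "\<forall>i<n. f i = 0"
      using path_signless_form_eq_imp_zero[OF n] path_deg_form_eq_imp_first_zero[OF n] unfolding cB_def by blast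
    then show False using f unfolding A_alpha_eigenfun_def by blast
  qed
qed

lemma A_alpha_path_bound_eigenvalue:
  assumes n: "3 \<le> n" and \<alpha>: "\<alpha> \<in> {0, 1/2, 1}"
  shows "eigenvalue (A_alpha \<alpha> n) (A_alpha_path_bound \<alpha> n)"
  unfolding eigenvalue_A_alpha_iff
proof -
  consider "\<alpha> = 0" | "\<alpha> = 1/2" | "\<alpha> = 1" using \<alpha> by auto
  then show "\<exists>f. A_alpha_eigenfun \<alpha> n (A_alpha_path_bound \<alpha> n) f"
  proof cases
    case 1
    have "A_alpha_eigenfun 0 n (A_alpha_path_bound 0 n) (path_adj_perron n)"
      unfolding A_alpha_eigenfun_def A_alpha_path_bound_def
      using n path_adj_perron_pos[of 0 n] path_nbr_sum_adj_perron[of _ n] by (auto intro!: exI[of _ 0])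
    then show ?thesis unfolding 1 by blast
  next
    case 2
    have "A_alpha_eigenfun (1/2) n (A_alpha_path_bound (1/2) n) (path_signless_perron n)"
      unfolding A_alpha_eigenfun_def A_alpha_path_bound_def
      using n path_signless_perron_pos[of 0 n] path_nbr_sum_signless_perron[of _ n]
      by (auto simp: field_simps intro!: exI[of _ 0])
    then show ?thesis unfolding 2 by blast
  next
    case 3
    have "A_alpha_eigenfun 1 n (A_alpha_path_bound 1 n) (\<lambda>i. if i = 1 then 1 else 0)"
      unfolding A_alpha_eigenfun_def A_alpha_path_bound_def
      using n by (auto simp: path_degree_eq)
    then show ?thesis unfolding 3 by blast
  qed
qed

lemma A_alpha_eigenvalue_le:
  assumes n: "3 \<le> n" and \<alpha>: "0 \<le> \<alpha>" "\<alpha> \<le> 1" and k: "eigenvalue (A_alpha \<alpha> n) k"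
  shows "k \<le> A_alpha_path_bound \<alpha> n \<and> (\<alpha> \<notin> {0, 1/2, 1} \<longrightarrow> k < A_alpha_path_bound \<alpha> n)"
proof -
  obtain f where f: "A_alpha_eigenfun \<alpha> n k f" using k eigenvalue_A_alpha_iff by blast
  have n2: "2 \<le> n" using n by simp
  show ?thesis
  proof (cases "\<alpha> < 1/2")
    case True
    then show ?thesis using A_alpha_eigenfun_le_below_half[OF n2 \<alpha>(1) True f] by auto
  next
    case False
    then show ?thesis using A_alpha_eigenfun_le_above_half[OF n2 _ \<alpha>(2) f] by auto
  qed
qed

theorem corollary12:
  fixes n :: nat and \<alpha> :: real
  assumes "n \<ge> 3" and "0 \<le> \<alpha>" and "\<alpha> \<le> 1"
  shows "rho (A_alpha \<alpha> n) \<le>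
           (if \<alpha> < 1/2 then 2*\<alpha> + 2*(1-\<alpha>)*cos (pi / real (n+1))
            else 2*\<alpha> + 2*(1-\<alpha>)*cos (pi / real n))
     \<and> (rho (A_alpha \<alpha> n) =
           (if \<alpha> < 1/2 then 2*\<alpha> + 2*(1-\<alpha>)*cos (pi / real (n+1))
            else 2*\<alpha> + 2*(1-\<alpha>)*cos (pi / real n))
        \<longleftrightarrow> \<alpha> \<in> {0, 1/2, 1})"
proof -
  let ?S = "{k. eigenvalue (A_alpha \<alpha> n) k}" and ?b = "A_alpha_path_bound \<alpha> n"
  have fin: "finite ?S"
    using card_finite_spectrum(1)[OF A_alpha_carrier] unfolding spectrum_def by simp
  have ne: "?S \<noteq> {}"
    using symmetric_real_eigenvalue_exists[OF A_alpha_carrier] A_alpha_symmetric assms(1) by auto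
  have rho: "rho (A_alpha \<alpha> n) \<in> ?S" unfolding rho_def by (rule Max_in[OF fin ne])
  have le: "rho (A_alpha \<alpha> n) \<le> ?b"
    using A_alpha_eigenvalue_le[OF assms] rho by simp
  moreover have "rho (A_alpha \<alpha> n) = ?b \<longleftrightarrow> \<alpha> \<in> {0, 1/2, 1}"
  proof
    assume "rho (A_alpha \<alpha> n) = ?b"
    then show "\<alpha> \<in> {0, 1/2, 1}" using A_alpha_eigenvalue_le[OF assms] rho by force
  next
    assume "\<alpha> \<in> {0, 1/2, 1}"
    then have "?b \<le> rho (A_alpha \<alpha> n)"
      unfolding rho_def using A_alpha_path_bound_eigenvalue[OF assms(1)] by (simp add: Max_ge[OF fin])
    then show "rho (A_alpha \<alpha> n) = ?b" using le by simp
  qed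
  ultimately show ?thesis by (simp only: A_alpha_path_bound_def)
qed

end
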